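(* Let $a$ be an element of a ring $K$ such that $z_0a^m+z_1a^{m-1}+\dots+z_{m-1}a=0$ for some positive integer $m$ and integers $z_0,\dots,z_{m-1}$ with $z_0>0$, and let $k=\gcd(z_0,z_1,\dots,z_{m-1})$. Suppose moreover that $d\,f(a)=0$ for some integer $d>1$ and some monic $f\in\mathbb{Z}[x]$ with $f(0)=0$. Then $k\,\varphi(a)=0$ for some monic $\varphi\in\mathbb{Z}[x]$ with $\varphi(0)=0$ and $\deg\varphi\le m$.
   Context: Rings are associative and not necessarily unital. *)

theory Defs
  imports "HOL-Computational_Algebra.Polynomial"
begin

text \<open>Rings are associative but not necessarily unital: we use the type class ring
  (no multiplicative identity). Positive powers and integer multiples are defined here.\<close>

fun ppow :: "'a::semigroup_mult \<Rightarrow> nat \<Rightarrow> 'a" where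
  "ppow a 0 = undefined"
| "ppow a (Suc 0) = a"
| "ppow a (Suc (Suc n)) = a * ppow a (Suc n)"

definition natmult :: "nat \<Rightarrow> 'a::comm_monoid_add \<Rightarrow> 'a" where
  "natmult n x = (\<Sum>i<n. x)"

definition zmult :: "int \<Rightarrow> 'a::ab_group_add \<Rightarrow> 'a" where
  "zmult z x = (if 0 \<le> z then natmult (nat z) x else - natmult (nat (- z)) x)"

definition peval0 :: "int poly \<Rightarrow> 'a::ring \<Rightarrow> 'a" where
  "peval0 f a = (\<Sum>i\<in>{1..degree f}. zmult (coeff f i) (ppow a i))"

end

theory Submission
  imports Defs "HOL-Computational_Algebra.Polynomial_Factorial"
begin

text \<open>
  The polynomials \<open>h \<in> \<int>[x]\<close> with \<open>k \<cdot> (x h)(a) = 0\<close> form an ideal \<open>I\<close>. Dividing the relation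
  by \<open>k\<close> puts a primitive polynomial \<open>W\<close> of degree \<open>m - 1\<close> into \<open>I\<close>, and \<open>d f\<close> gives \<open>d f' \<in> I\<close>
  for the monic \<open>f = x f'\<close>. Splitting off \<open>h = gcd W f'\<close> (monic, as it divides \<open>f'\<close>) leaves
  coprime cofactors, so the ideal \<open>{u. u h \<in> I}\<close> contains both a primitive polynomial and a
  nonzero constant. In such an ideal the leading coefficients in a fixed degree form an ideal of
  \<open>\<int>\<close> escaping every prime \<open>p\<close> (reduce modulo the \<open>p\<close>-power part of the constant, using a
  polynomial that is monic modulo \<open>p\<close>), hence containing \<open>1\<close>; this yields a monic member of the
  same degree, and multiplying back by \<open>h\<close> and \<open>x\<close> gives \<open>\<phi>\<close>.
\<close>

lemma natmult_0 [simp]: "natmult 0 x = 0"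
  by (simp add: natmult_def)

lemma natmult_Suc [simp]: "natmult (Suc n) x = natmult n x + x"
  by (simp add: natmult_def)

lemma natmult_add_left: "natmult (m + n) x = natmult m x + natmult n x"
  by (induct n) (simp_all add: add.assoc)

lemma natmult_add_right: "natmult n (x + y) = natmult n x + natmult n y"
  by (induct n) (simp_all add: ac_simps)

lemma natmult_mult: "natmult (m * n) x = natmult m (natmult n x)"
  by (induct m) (simp_all add: natmult_add_left add.commute)

lemma natmult_mult_right: "natmult n (x * y) = x * natmult n (y :: 'a :: ring)"
  by (induct n) (simp_all add: distrib_left)

lemma zmult_eq_natmult_diff: "zmult u x = natmult (nat u) x - natmult (nat (- u)) x"
  by (simp add: zmult_def)

lemma zmult_of_nat_diff: "zmult (int m - int n) x = natmult m x - natmult n x"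
proof -
  have "nat (int m - int n) + n = m + nat (int n - int m)" by simp
  then have "natmult (nat (int m - int n)) x + natmult n x
      = natmult m x + natmult (nat (int n - int m)) x"
    by (metis natmult_add_left)
  then show ?thesis
    unfolding zmult_eq_natmult_diff minus_diff_eq
    by (metis add_diff_cancel_right' diff_diff_eq2 diff_add_cancel add.commute)
qed

lemma zmult_add_left: "zmult (u + v) x = zmult u x + zmult v x"
proof -
  have "u + v = int (nat u + nat v) - int (nat (- u) + nat (- v))" by simp
  then have "zmult (u + v) x = natmult (nat u + nat v) x - natmult (nat (- u) + nat (- v)) x"
    by (metis zmult_of_nat_diff)
  then show ?thesis
    by (simp add: zmult_eq_natmult_diff natmult_add_left)
qed

lemma zmult_add_right: "zmult u (x + y) = zmult u x + zmult u y"
  by (simp add: zmult_eq_natmult_diff natmult_add_right algebra_simps)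

lemma zmult_0_left [simp]: "zmult 0 x = 0"
  by (simp add: zmult_def)

lemma zmult_0_right [simp]: "zmult u 0 = 0"
  using zmult_add_right[of u 0 0] by simp

lemma zmult_mult_right: "zmult u (x * y) = x * zmult u (y :: 'a :: ring)"
  by (simp add: zmult_eq_natmult_diff natmult_mult_right right_diff_distrib)

lemma zmult_sum: "zmult u (sum f A) = (\<Sum>i\<in>A. zmult u (f i))"
  by (induct A rule: infinite_finite_induct) (simp_all add: zmult_add_right)

lemma zmult_natmult: "zmult u (natmult n x) = zmult (u * int n) x"
proof -
  have "u * int n = int (nat u * n) - int (nat (- u) * n)"
    by (simp add: left_diff_distrib[symmetric])
  then have "zmult (u * int n) x = natmult (nat u * n) x - natmult (nat (- u) * n) x"
    by (simp only: zmult_of_nat_diff)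
  then show ?thesis
    by (simp only: zmult_eq_natmult_diff[of u] natmult_mult)
qed

lemma zmult_diff_left: "zmult (u - v) x = zmult u x - zmult v x"
  using zmult_add_left[of "u - v" v x] by (simp add: algebra_simps)

lemma zmult_diff_right: "zmult u (x - y) = zmult u x - zmult u y"
  using zmult_add_right[of u "x - y" y] by (simp add: algebra_simps)

lemma zmult_zmult: "zmult u (zmult v x) = zmult (u * v) x"
proof -
  have "u * v = u * int (nat v) - u * int (nat (- v))"
    by (simp add: right_diff_distrib[symmetric])
  then show ?thesis
    by (simp only: zmult_eq_natmult_diff[of v] zmult_diff_right zmult_natmult zmult_diff_left)
qed

text \<open>Value of \<open>x h\<close> at \<open>a\<close>: without a unit only polynomials without constant term can be
  evaluated, and these are closed under multiplication by arbitrary polynomials.\<close>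

definition peval_shift :: "int poly \<Rightarrow> 'a::ring \<Rightarrow> 'a" where
  "peval_shift h a = peval0 (pCons 0 h) a"

lemma peval_shift_eq_sum:
  assumes "degree h < B"
  shows "peval_shift h a = (\<Sum>i<B. zmult (coeff h i) (ppow a (Suc i)))"
proof (cases "h = 0")
  case True
  then show ?thesis by (simp add: peval_shift_def peval0_def)
next
  case False
  have "peval_shift h a = (\<Sum>i\<in>{Suc 0..Suc (degree h)}. zmult (coeff (pCons 0 h) i) (ppow a i))"
    using False by (simp add: peval_shift_def peval0_def)
  also have "\<dots> = (\<Sum>i<Suc (degree h). zmult (coeff h i) (ppow a (Suc i)))"
    by (simp only: sum.shift_bounds_cl_Suc_ivl coeff_pCons_Suc atLeast0AtMost lessThan_Suc_atMost)
  also have "\<dots> = (\<Sum>i<B. zmult (coeff h i) (ppow a (Suc i)))"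
    by (rule sum.mono_neutral_left) (use assms in \<open>auto simp: coeff_eq_0\<close>)
  finally show ?thesis .
qed

lemma peval_shift_0 [simp]: "peval_shift 0 a = 0"
  by (simp add: peval_shift_def peval0_def)

lemma peval_shift_add: "peval_shift (p + q) a = peval_shift p a + peval_shift q a"
proof -
  define B where "B = Suc (max (degree p) (degree q))"
  have "degree (p + q) < B" "degree p < B" "degree q < B"
    unfolding B_def using degree_add_le_max[of p q] by auto
  then show ?thesis
    by (simp add: peval_shift_eq_sum[of _ B] sum.distrib zmult_add_left)
qed

lemma peval_shift_smult: "peval_shift (smult c p) a = zmult c (peval_shift p a)"
proof -
  have "degree (smult c p) < Suc (degree p)" "degree p < Suc (degree p)"
    using degree_smult_le[of c p] by auto
  then show ?thesis
    by (simp only: peval_shift_eq_sum coeff_smult zmult_sum zmult_zmult)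
qed

lemma peval_shift_pCons_0: "peval_shift (pCons 0 p) a = a * peval_shift p a"
proof -
  define B where "B = Suc (degree p)"
  have "degree (pCons 0 p) < Suc B" "degree p < B"
    unfolding B_def by (auto intro: le_imp_less_Suc degree_pCons_le)
  then show ?thesis
    by (simp only: peval_shift_eq_sum sum.lessThan_Suc_shift coeff_pCons_0 coeff_pCons_Suc
        zmult_0_left add_0 ppow.simps zmult_mult_right sum_distrib_left)
qed

lemma peval_shift_mult_annihilated:
  assumes "zmult k (peval_shift h a) = 0"
  shows "zmult k (peval_shift (q * h) a) = 0"
proof (induct q rule: pCons_induct)
  case (pCons c q)
  have "zmult k (zmult c (peval_shift h a)) = zmult c (zmult k (peval_shift h a))"
    by (metis zmult_zmult mult.commute)
  also have "\<dots> = 0" by (simp add: assms)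
  finally have "zmult k (peval_shift (pCons c q * h) a) = a * zmult k (peval_shift (q * h) a)"
    by (simp only: mult_pCons_left peval_shift_add peval_shift_smult peval_shift_pCons_0
        zmult_add_right zmult_mult_right add_0)
  with pCons(2) show ?case by simp
qed simp

definition is_ideal :: "'a::comm_ring set \<Rightarrow> bool" where
  "is_ideal I \<longleftrightarrow> 0 \<in> I \<and> (\<forall>x\<in>I. \<forall>y\<in>I. x + y \<in> I) \<and> (\<forall>x\<in>I. \<forall>q. q * x \<in> I)"

lemma ideal_0: "is_ideal I \<Longrightarrow> 0 \<in> I"
  by (simp add: is_ideal_def)

lemma ideal_add: "is_ideal I \<Longrightarrow> x \<in> I \<Longrightarrow> y \<in> I \<Longrightarrow> x + y \<in> I"
  by (simp add: is_ideal_def)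

lemma ideal_mult_left: "is_ideal I \<Longrightarrow> x \<in> I \<Longrightarrow> q * x \<in> I"
  by (simp add: is_ideal_def)

lemma ideal_mult_right: "is_ideal I \<Longrightarrow> x \<in> I \<Longrightarrow> x * q \<in> I"
  using ideal_mult_left[of I x q] by (simp add: mult.commute)

lemma ideal_smult: "is_ideal I \<Longrightarrow> x \<in> I \<Longrightarrow> smult c x \<in> I"
  using ideal_mult_left[of I x "[:c:]"] by simp

lemma is_ideal_quotient: "is_ideal I \<Longrightarrow> is_ideal {u. u * c \<in> I}"
  by (auto simp: is_ideal_def distrib_right mult.assoc)

lemma is_ideal_annihilator: "is_ideal {h. zmult k (peval_shift h a) = 0}"
  by (auto simp: is_ideal_def peval_shift_add zmult_add_right peval_shift_mult_annihilated)

lemma highest_coeff_not_dvd: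
  fixes W :: "int poly"
  assumes "\<not> [:p:] dvd W"
  obtains s where "\<not> p dvd coeff W s" "\<forall>i>s. p dvd coeff W i"
proof -
  define S where "S = {i. \<not> p dvd coeff W i}"
  have "S \<subseteq> {..degree W}"
    unfolding S_def by (force intro: le_degree)
  then have "finite S" by (rule finite_subset) simp
  moreover have "S \<noteq> {}" using assms unfolding S_def by (auto simp: const_poly_dvd_iff)
  ultimately have "Max S \<in> S" "\<forall>i>Max S. i \<notin> S"
    by (auto dest: Max_ge)
  then show ?thesis using that unfolding S_def by blast
qed

lemma monic_congruent_mod_prime:
  fixes W :: "int poly"
  assumes "prime p" and s: "\<not> p dvd coeff W s" "\<forall>i>s. p dvd coeff W i"
  obtains u P Q where "smult u W = P + smult p Q" "lead_coeff P = 1" "degree P = s"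
proof -
  have "coprime (coeff W s) p"
    using prime_imp_coprime[OF assms(1) s(1)] by (simp add: ac_simps)
  then obtain u v where uv: "u * coeff W s + v * p = 1"
    using bezout_int[of "coeff W s" p] by auto
  define P where "P = poly_cutoff s (smult u W) + monom 1 s"
  have coeff_P: "coeff P n = (if n < s then u * coeff W n else if n = s then 1 else 0)" for n
    by (simp add: P_def coeff_poly_cutoff coeff_monom)
  have "p dvd coeff (smult u W - P) n" for n
  proof -
    consider "n < s" | "n = s" | "n > s" by linarith
    then show ?thesis
    proof cases
      case 2
      then have "coeff (smult u W - P) n = - v * p" using uv by (simp add: coeff_P)
      then show ?thesis by simp
    qed (use s(2) in \<open>auto simp: coeff_P\<close>)
  qed
  then have "[:p:] dvd smult u W - P" by (simp add: const_poly_dvd_iff)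
  then obtain Q where "smult u W - P = smult p Q" by auto
  moreover have "degree P = s"
    by (rule antisym, rule degree_le) (auto simp: coeff_P intro: le_degree)
  moreover from this have "lead_coeff P = 1" by (simp add: coeff_P)
  ultimately show ?thesis using that[of u P Q] by (simp add: algebra_simps)
qed

lemma reduce_mod_prime_power:
  fixes P Q :: "int poly"
  assumes I: "is_ideal I" and PQ: "P + smult p Q \<in> I" and P: "lead_coeff P = 1"
  shows "\<exists>r q. (\<forall>i\<ge>degree P. coeff r i = 0) \<and> h - r - smult (p ^ j) q \<in> I"
proof (induct j arbitrary: h)
  case 0
  show ?case
    by (rule exI[of _ 0], rule exI[of _ h]) (simp add: ideal_0[OF I])
next
  case (Suc j)
  then obtain r q where r: "\<forall>i\<ge>degree P. coeff r i = 0" and hrq: "h - r - smult (p ^ j) q \<in> I"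
    by blast
  have "P \<noteq> 0" using P by auto
  obtain q' r' where "pseudo_divmod q P = (q', r')" by fastforce
  with pseudo_divmod[OF \<open>P \<noteq> 0\<close> this] P
  have q: "q = P * q' + r'" and r': "r' = 0 \<or> degree r' < degree P" by auto
  have "h - (r + smult (p ^ j) r') - smult (p ^ Suc j) (- Q * q')
      = (h - r - smult (p ^ j) q) + smult (p ^ j) ((P + smult p Q) * q')"
    unfolding q
    by (simp add: smult_add_right smult_diff_right smult_add_left distrib_right mult.commute[of p])
  also have "\<dots> \<in> I"
    by (intro ideal_add[OF I hrq] ideal_smult[OF I] ideal_mult_right[OF I PQ])
  finally show ?case
    using r r' by (intro exI[of _ "r + smult (p ^ j) r'"] exI[of _ "- Q * q'"]) (auto simp: coeff_eq_0)
qed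

lemma ideal_coeff_not_dvd_prime:
  fixes W :: "int poly"
  assumes I: "is_ideal I" and "W \<in> I" and N: "[:N:] \<in> I" "N \<noteq> 0" and p: "prime p"
    and W: "\<not> [:p:] dvd W" "degree W \<le> M"
  shows "\<exists>h\<in>I. degree h \<le> M \<and> \<not> p dvd coeff h M"
proof -
  obtain s where s: "\<not> p dvd coeff W s" "\<forall>i>s. p dvd coeff W i"
    using W(1) highest_coeff_not_dvd by auto
  have "s \<le> M" using s(1) W(2) le_degree[of W s] by fastforce
  obtain u P Q where PQ: "smult u W = P + smult p Q" "lead_coeff P = 1" "degree P = s"
    using monic_congruent_mod_prime[OF p s] .
  have "P + smult p Q \<in> I" using ideal_smult[OF I \<open>W \<in> I\<close>, of u] PQ(1) by simp
  text \<open>Write \<open>N = p\<^sup>e N'\<close>; working modulo \<open>p\<^sup>e\<close>, the monic \<open>P\<close> reduces \<open>x\<^sup>M\<close> to lower degree,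
    and multiplying by \<open>N'\<close> clears the \<open>p\<^sup>e\<close>-part with the help of \<open>N \<in> I\<close>.\<close>
  obtain N' where N': "N = p ^ multiplicity p N * N'" "\<not> p dvd N'"
    using multiplicity_decompose'[OF N(2)] p not_prime_unit by blast
  obtain r q where r: "\<forall>i\<ge>s. coeff r i = 0"
    and rq: "monom 1 M - r - smult (p ^ multiplicity p N) q \<in> I"
    using reduce_mod_prime_power[OF I \<open>P + smult p Q \<in> I\<close> PQ(2)] PQ(3) by blast
  have "smult N' (monom 1 M - r - smult (p ^ multiplicity p N) q) + [:N:] * q
      = smult N' (monom 1 M - r)"
    by (subst N'(1)) (simp add: smult_diff_right mult.commute)
  moreover have "smult N' (monom 1 M - r - smult (p ^ multiplicity p N) q) + [:N:] * q \<in> I"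
    by (intro ideal_add[OF I] ideal_smult[OF I rq] ideal_mult_right[OF I N(1)])
  ultimately have "smult N' (monom 1 M - r) \<in> I" by simp
  moreover have "degree (smult N' (monom 1 M - r)) \<le> M"
    by (rule degree_le) (use r \<open>s \<le> M\<close> in \<open>auto simp: coeff_monom\<close>)
  moreover have "\<not> p dvd coeff (smult N' (monom 1 M - r)) M"
    using r \<open>s \<le> M\<close> N'(2) by simp
  ultimately show ?thesis by blast
qed

lemma one_mem_int_ideal:
  fixes L :: "int set"
  assumes L: "is_ideal L" and not_dvd: "\<And>p. prime p \<Longrightarrow> \<exists>t\<in>L. \<not> p dvd t"
  shows "1 \<in> L"
proof -
  obtain t where "t \<in> L" "\<not> 2 dvd t" using not_dvd[of 2] by auto
  moreover have "\<bar>t\<bar> = sgn t * t" by (simp add: abs_sgn mult.commute)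
  ultimately have "\<bar>t\<bar> \<in> L" "t \<noteq> 0" using ideal_mult_left[OF L] by auto
  then have "\<exists>n::nat. n > 0 \<and> int n \<in> L" by (intro exI[of _ "nat \<bar>t\<bar>"]) auto
  define g where "g = (LEAST n::nat. n > 0 \<and> int n \<in> L)"
  have g: "g > 0" "int g \<in> L"
    using LeastI_ex[OF \<open>\<exists>n. _\<close>] unfolding g_def by auto
  have g_least: "g \<le> n" if "n > 0" "int n \<in> L" for n
    unfolding g_def using that by (intro Least_le) simp
  have g_dvd: "int g dvd t" if "t \<in> L" for t
  proof (rule ccontr)
    assume "\<not> int g dvd t"
    then have pos: "t mod int g > 0" using g(1) pos_mod_sign[of "int g" t]
      by (simp add: dvd_eq_mod_eq_0 order_le_less)
    have "t + (- (t div int g)) * int g \<in> L"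
      by (rule ideal_add[OF L that ideal_mult_left[OF L g(2)]])
    moreover have "t + (- (t div int g)) * int g = int (nat (t mod int g))"
      using pos by (simp add: minus_div_mult_eq_mod[symmetric])
    ultimately have "int (nat (t mod int g)) \<in> L" by simp
    with pos have "g \<le> nat (t mod int g)" by (intro g_least) auto
    then have "int g \<le> t mod int g" using pos by simp
    moreover have "t mod int g < int g" using g(1) by simp
    ultimately show False by simp
  qed
  have "g = 1"
  proof (rule ccontr)
    assume "g \<noteq> 1"
    then obtain p where "prime p" "p dvd int g"
      using g(1) prime_divisorE[of "int g"] by auto
    with not_dvd g_dvd show False by (blast intro: dvd_trans)
  qed
  with g(2) show ?thesis by simp
qed

lemma ideal_with_const_contains_monic:
  fixes W :: "int poly"
  assumes I: "is_ideal I" and "W \<in> I" "content W = 1" and N: "[:N:] \<in> I" "N \<noteq> 0"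
  shows "\<exists>G\<in>I. lead_coeff G = 1 \<and> degree G = degree W"
proof -
  define L where "L = {coeff h (degree W) | h. h \<in> I \<and> degree h \<le> degree W}"
  have "is_ideal L"
    unfolding is_ideal_def L_def
  proof safe
    show "\<exists>h. 0 = coeff h (degree W) \<and> h \<in> I \<and> degree h \<le> degree W"
      using ideal_0[OF I] by force
  next
    fix h h' assume "h \<in> I" "degree h \<le> degree W" "h' \<in> I" "degree h' \<le> degree W"
    then show "\<exists>g. coeff h (degree W) + coeff h' (degree W) = coeff g (degree W)
        \<and> g \<in> I \<and> degree g \<le> degree W"
      by (intro exI[of _ "h + h'"]) (auto intro: ideal_add[OF I] degree_add_le)
  next
    fix h q assume "h \<in> I" "degree h \<le> degree W"
    then show "\<exists>g. q * coeff h (degree W) = coeff g (degree W) \<and> g \<in> I \<and> degree g \<le> degree W"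
      by (intro exI[of _ "smult q h"]) (auto intro: ideal_smult[OF I] ideal_0[OF I] order.trans[OF degree_smult_le])
  qed
  moreover have "\<exists>t\<in>L. \<not> p dvd t" if "prime p" for p
  proof -
    have "\<not> [:p:] dvd W"
      using \<open>content W = 1\<close> prime_gt_1_int[OF \<open>prime p\<close>]
      by (simp add: const_poly_dvd_iff_dvd_content)
    from ideal_coeff_not_dvd_prime[OF I \<open>W \<in> I\<close> N \<open>prime p\<close> this order.refl]
    show ?thesis unfolding L_def by blast
  qed
  ultimately have "1 \<in> L" by (rule one_mem_int_ideal)
  then obtain G where "G \<in> I" "degree G \<le> degree W" "coeff G (degree W) = 1"
    unfolding L_def by auto
  moreover from this have "degree G = degree W" using le_degree[of G "degree W"] by fastforce
  ultimately show ?thesis by (intro bexI[of _ G]) auto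
qed

lemma coprime_fract_poly:
  fixes p q :: "int poly"
  assumes "coprime p q"
  shows "coprime (fract_poly p) (fract_poly q)"
proof (rule coprimeI)
  fix c assume c: "c dvd fract_poly p" "c dvd fract_poly q"
  have "c \<noteq> 0"
  proof
    assume "c = 0"
    with c assms show False by simp
  qed
  obtain a g where g: "c = smult a (fract_poly g)" "content g = 1"
    using content_decompose_fract .
  with \<open>c \<noteq> 0\<close> have "a \<noteq> 0" by auto
  then have "fract_poly g = [:inverse a:] * c" using g(1) by simp
  then have "fract_poly g dvd c" using \<open>a \<noteq> 0\<close> by (simp add: smult_dvd_iff)
  with c g(2) have "g dvd p" "g dvd q"
    by (auto intro: fract_poly_dvdD dvd_trans)
  with assms have "is_unit g" by (rule coprime_common_divisor)
  then have "degree g = 0" by (auto simp: is_unit_poly_iff)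
  then have "degree c = 0" using g(1) by (simp add: degree_map_poly)
  with \<open>c \<noteq> 0\<close> show "is_unit c" by (simp add: is_unit_iff_degree)
qed

lemma fract_poly_clear_denominators:
  fixes x :: "int fract poly"
  obtains d x' where "d \<noteq> 0" "smult (to_fract d) x = fract_poly x'"
proof -
  obtain c x0 where x: "x = smult c (fract_poly x0)"
    using content_decompose_fract .
  obtain a b where "c = Fract a b" "b \<noteq> 0" by (rule Fract_cases)
  then have "smult (to_fract b) x = fract_poly (smult a x0)"
    by (simp add: x Fract_conv_to_fract)
  with \<open>b \<noteq> 0\<close> show ?thesis by (rule that)
qed

lemma ideal_min_degree_dvd:
  fixes I :: "'a::field poly set"
  assumes I: "is_ideal I" and g: "g \<in> I" "g \<noteq> 0"
    and min: "\<And>h. h \<in> I \<Longrightarrow> h \<noteq> 0 \<Longrightarrow> degree g \<le> degree h" and "h \<in> I"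
  shows "g dvd h"
proof -
  have "h + (- (h div g)) * g \<in> I"
    by (rule ideal_add[OF I \<open>h \<in> I\<close> ideal_mult_left[OF I g(1)]])
  then have "h mod g \<in> I" by (simp add: mod_div_mult_eq[symmetric] minus_div_mult_eq_mod[symmetric])
  with min g(2) degree_mod_less[of g h] have "h mod g = 0" by fastforce
  then show ?thesis by (simp add: dvd_eq_mod_eq_0)
qed

lemma coprime_imp_const_combination:
  fixes p q :: "int poly"
  assumes "coprime p q"
  obtains A B r where "r \<noteq> 0" "A * p + B * q = [:r:]"
proof -
  define S where "S = {x * fract_poly p + y * fract_poly q | x y. True}"
  have comb: "x * fract_poly p + y * fract_poly q \<in> S" for x y
    unfolding S_def by blast
  have S: "is_ideal S"
    unfolding is_ideal_def
  proof (intro conjI ballI allI)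
    show "0 \<in> S" using comb[of 0 0] by simp
  next
    fix u v assume "u \<in> S" "v \<in> S"
    then obtain x y x' y' where "u = x * fract_poly p + y * fract_poly q"
      "v = x' * fract_poly p + y' * fract_poly q"
      unfolding S_def by blast
    then show "u + v \<in> S" using comb[of "x + x'" "y + y'"] by (simp add: algebra_simps)
  next
    fix u c assume "u \<in> S"
    then obtain x y where "u = x * fract_poly p + y * fract_poly q"
      unfolding S_def by blast
    then show "c * u \<in> S" using comb[of "c * x" "c * y"] by (simp add: algebra_simps)
  qed
  have "fract_poly p \<in> S" "fract_poly q \<in> S"
    using comb[of 1 0] comb[of 0 1] by simp_all
  moreover have "p \<noteq> 0 \<or> q \<noteq> 0" using assms by auto
  ultimately have "\<exists>h. h \<in> S \<and> h \<noteq> 0" by auto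
  then obtain g where g: "g \<in> S" "g \<noteq> 0"
    and min: "\<And>h. h \<in> S \<Longrightarrow> h \<noteq> 0 \<Longrightarrow> degree g \<le> degree h"
    using ex_has_least_nat[of "\<lambda>h. h \<in> S \<and> h \<noteq> 0" _ degree] by blast
  have "g dvd fract_poly p" "g dvd fract_poly q"
    using ideal_min_degree_dvd[OF S g min] \<open>fract_poly p \<in> S\<close> \<open>fract_poly q \<in> S\<close> by auto
  with coprime_fract_poly[OF assms] have "is_unit g" by (rule coprime_common_divisor)
  then have "degree g = 0" using g(2) by (simp add: is_unit_iff_degree)
  obtain x y where "g = x * fract_poly p + y * fract_poly q"
    using g(1) unfolding S_def by blast
  obtain dx x' where dx: "dx \<noteq> 0" "smult (to_fract dx) x = fract_poly x'"
    using fract_poly_clear_denominators .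
  obtain dy y' where dy: "dy \<noteq> 0" "smult (to_fract dy) y = fract_poly y'"
    using fract_poly_clear_denominators .
  define P where "P = smult dy x' * p + smult dx y' * q"
  have "fract_poly P = smult (to_fract (dx * dy)) g"
    by (simp add: P_def \<open>g = _\<close> flip: dx(2) dy(2) add: smult_add_right mult.commute mult.left_commute)
  then have "degree P = 0" "P \<noteq> 0"
    using \<open>degree g = 0\<close> g(2) dx(1) dy(1) by (auto simp: degree_map_poly dest: arg_cong[of _ _ degree])
  then obtain r where "P = [:r:]" "r \<noteq> 0" by (auto elim: degree_eq_zeroE)
  with that show ?thesis unfolding P_def by blast
qed

lemma ideal_with_monic_multiple_contains_monic:
  fixes W f :: "int poly"
  assumes I: "is_ideal I" and "W \<in> I" "content W = 1"
    and f: "lead_coeff f = 1" "smult d f \<in> I" "d \<noteq> 0"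
  shows "\<exists>G\<in>I. lead_coeff G = 1 \<and> degree G = degree W"
proof -
  define h where "h = gcd W f"
  have "f \<noteq> 0" using f(1) by auto
  then have "h \<noteq> 0" by (simp add: h_def)
  then obtain W' f' where Wf: "W = W' * h" "f = f' * h" "coprime W' f'"
    using gcd_coprime_exists[of W f] unfolding h_def by blast
  have "is_unit (lead_coeff h)"
    using f(1) unfolding Wf(2) lead_coeff_mult by (metis dvd_triv_right)
  moreover have "unit_factor h = 1"
    using \<open>h \<noteq> 0\<close> unit_factor_normalize[of h] by (simp add: h_def)
  ultimately have h: "lead_coeff h = 1"
    by (auto simp: unit_factor_poly_def one_pCons sgn_if split: if_splits)
  obtain A B r where r: "r \<noteq> 0" "A * W' + B * f' = [:r:]"
    using coprime_imp_const_combination[OF Wf(3)] .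
  define I' where "I' = {u. u * h \<in> I}"
  have I': "is_ideal I'" unfolding I'_def by (rule is_ideal_quotient[OF I])
  have "W' \<in> I'" "smult d f' \<in> I'"
    using \<open>W \<in> I\<close> f(2) unfolding I'_def Wf by simp_all
  then have "smult d A * W' + B * smult d f' \<in> I'"
    by (intro ideal_add[OF I'] ideal_mult_left[OF I'])
  moreover have "smult d A * W' + B * smult d f' = [:d * r:]"
    using arg_cong[OF r(2), of "smult d"] by (simp add: smult_add_right)
  ultimately have "[:d * r:] \<in> I'" by simp
  have "content W' = 1"
    using \<open>content W = 1\<close> unfolding Wf(1) content_mult
    by (metis dvd_triv_left is_unit_content_iff)
  obtain G where "G \<in> I'" "lead_coeff G = 1" "degree G = degree W'"
    using ideal_with_const_contains_monic[OF I' \<open>W' \<in> I'\<close> \<open>content W' = 1\<close> \<open>[:d * r:] \<in> I'\<close>] r(1) f(3)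
    by auto
  moreover have "G \<noteq> 0" "W' \<noteq> 0" using \<open>lead_coeff G = 1\<close> \<open>content W' = 1\<close> by auto
  ultimately have "G * h \<in> I" "lead_coeff (G * h) = 1" "degree (G * h) = degree W"
    using h \<open>h \<noteq> 0\<close> unfolding I'_def Wf(1) lead_coeff_mult by (simp_all add: degree_mult_eq)
  then show ?thesis by blast
qed

text \<open>\<open>z\<^sub>0 x\<^sup>m\<^sup>-\<^sup>1 + z\<^sub>1 x\<^sup>m\<^sup>-\<^sup>2 + \<dots> + z\<^sub>m\<^sub>-\<^sub>1\<close>, so that the hypothesis on \<open>a\<close> says
  that \<open>peval_shift (relation_poly z m) a = 0\<close>.\<close>

definition relation_poly :: "(nat \<Rightarrow> int) \<Rightarrow> nat \<Rightarrow> int poly" where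
  "relation_poly z m = Poly (rev (map z [0..<m]))"

lemma coeffs_relation_poly:
  assumes "m > 0" "z 0 \<noteq> 0"
  shows "coeffs (relation_poly z m) = rev (map z [0..<m])"
  using assms by (simp add: relation_poly_def strip_while_rev upt_conv_Cons)

lemma degree_relation_poly:
  assumes "m > 0" "z 0 \<noteq> 0"
  shows "degree (relation_poly z m) = m - 1"
  using coeffs_relation_poly[of m z, OF assms] by (simp add: degree_eq_length_coeffs)

lemma content_relation_poly:
  assumes "m > 0" "z 0 \<noteq> 0"
  shows "content (relation_poly z m) = Gcd (z ` {..<m})"
  using coeffs_relation_poly[of m z, OF assms] by (simp add: content_def Gcd_fin_eq_Gcd lessThan_atLeast0)

lemma peval_shift_relation_poly:
  "peval_shift (relation_poly z m) a = (\<Sum>i<m. zmult (z i) (ppow a (m - i)))"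
proof (cases "m = 0")
  case False
  have "degree (relation_poly z m) < m"
    using False length_strip_while_le[of "(=) 0" "rev (map z [0..<m])"]
    by (simp add: degree_eq_length_coeffs relation_poly_def)
  then have "peval_shift (relation_poly z m) a = (\<Sum>i<m. zmult (z (m - Suc i)) (ppow a (Suc i)))"
    by (simp add: peval_shift_eq_sum relation_poly_def nth_default_def rev_nth)
  also have "\<dots> = (\<Sum>i<m. zmult (z (m - Suc i)) (ppow a (m - (m - Suc i))))"
    by (rule sum.cong) auto
  also have "\<dots> = (\<Sum>i<m. zmult (z i) (ppow a (m - i)))"
    by (rule sum.nat_diff_reindex)
  finally show ?thesis .
qed (simp add: relation_poly_def peval_shift_def peval0_def)

theorem lemma10:
  fixes a :: "'a::ring" and m :: nat and z :: "nat \<Rightarrow> int" and d :: int and f :: "int poly"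
  assumes "m > 0"
    and "z 0 > 0"
    and "(\<Sum>i<m. zmult (z i) (ppow a (m - i))) = 0"
    and "d > 1"
    and "lead_coeff f = 1" and "coeff f 0 = 0"
    and "zmult d (peval0 f a) = 0"
  shows "\<exists>\<phi>::int poly. lead_coeff \<phi> = 1 \<and> coeff \<phi> 0 = 0 \<and> degree \<phi> \<le> m
           \<and> zmult (Gcd (z ` {..<m})) (peval0 \<phi> a) = 0"
proof -
  define k where "k = Gcd (z ` {..<m})"
  define W where "W = primitive_part (relation_poly z m)"
  define I where "I = {h. zmult k (peval_shift h a) = 0}"
  have z0: "z 0 \<noteq> 0" using assms(2) by simp
  have "relation_poly z m \<noteq> 0"
    using coeffs_relation_poly[of m z, OF assms(1) z0] assms(1) by auto
  then have W: "content W = 1" "degree W = m - 1" "smult k W = relation_poly z m"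
    using degree_relation_poly[of m z, OF assms(1) z0]
      content_times_primitive_part[of "relation_poly z m"]
    by (simp_all add: W_def k_def content_relation_poly[of m z, OF assms(1) z0, symmetric])
  have I: "is_ideal I" unfolding I_def by (rule is_ideal_annihilator)
  have "W \<in> I"
    using assms(3) W(3) peval_shift_smult[of k W a] by (simp add: I_def peval_shift_relation_poly)
  obtain f' where f: "f = pCons 0 f'" using assms(6) by (cases f) auto
  have "lead_coeff f' = 1" using assms(5) f by (cases "f' = 0") auto
  have "zmult d (peval_shift f' a) = 0" using assms(7) by (simp add: f peval_shift_def)
  then have "smult d f' \<in> I" by (simp add: I_def peval_shift_smult zmult_zmult)
  obtain G where G: "G \<in> I" "lead_coeff G = 1" "degree G = m - 1"
    using ideal_with_monic_multiple_contains_monic[OF I \<open>W \<in> I\<close> W(1) \<open>lead_coeff f' = 1\<close>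
        \<open>smult d f' \<in> I\<close>] assms(4) W(2)
    by auto
  show ?thesis
  proof (intro exI conjI)
    have "G \<noteq> 0" using G(2) by auto
    then show "lead_coeff (pCons 0 G) = 1" using G(2) by simp
    show "degree (pCons 0 G) \<le> m" using \<open>G \<noteq> 0\<close> G(3) assms(1) by simp
    show "coeff (pCons 0 G) 0 = 0" by simp
    show "zmult (Gcd (z ` {..<m})) (peval0 (pCons 0 G) a) = 0"
      using G(1) by (simp add: I_def k_def peval_shift_def)
  qed
qed

end
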